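(* Assume the univalence axiom. The map $\mathrm{AbSES}:\mathrm{AbGroup}^{\mathrm{op}}\to\mathrm{AbGroup}\to\mathrm{Type}$, which is functorial in the first variable by pullback and in the second variable by pushout, is a bifunctor: for every short exact sequence $E\in\mathrm{AbSES}(B,A)$ and all homomorphisms $f:A\to A'$ and $g:B'\to B$ there is a path $f_*(g^*(E)) = g^*(f_*(E))$ in $\mathrm{AbSES}(B',A')$.
   Context: We work in homotopy type theory with univalence. For abelian groups $A,B$, $\mathrm{AbSES}(B,A)$ is the type of short exact sequences $(E,i,p)$: $E$ an abelian group, $i:A\to E$ injective, $p:E\to B$ surjective, $p\circ i=0$, and $A\to\ker p$ surjective. For $g:B'\to B$, the pullback $g^*:\mathrm{AbSES}(B,A)\to\mathrm{AbSES}(B',A)$ replaces the middle group $E$ by $E\times_B B'=\{(e,b')\mid p(e)=g(b')\}$ with the evident maps. For $f:A\to A'$, the pushout $f_*:\mathrm{AbSES}(B,A)\to\mathrm{AbSES}(B,A')$ replaces $E$ by $(A'\oplus E)/\{(f(a),-i(a))\mid a\in A\}$ with the evident maps. *)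

theory Defs
  imports "HOL-Algebra.Algebra"
begin

text \<open>Abelian groups are HOL-Algebra commutative groups (structures of type 'x monoid).
A short exact sequence in AbSES(B,A) is a triple (E,i,p).\<close>

definition is_AbSES :: "'b monoid \<Rightarrow> 'a monoid \<Rightarrow> 'e monoid \<Rightarrow> ('a \<Rightarrow> 'e) \<Rightarrow> ('e \<Rightarrow> 'b) \<Rightarrow> bool" where
  "is_AbSES B A E i p \<longleftrightarrow>
     comm_group A \<and> comm_group B \<and> comm_group E \<and>
     i \<in> hom A E \<and> p \<in> hom E B \<and>
     inj_on i (carrier A) \<and>
     p ` carrier E = carrier B \<and>
     (\<forall>a \<in> carrier A. p (i a) = \<one>\<^bsub>B\<^esub>) \<and>
     kernel E B p \<subseteq> i ` carrier A"

definition pb_mid :: "'e monoid \<Rightarrow> ('e \<Rightarrow> 'b) \<Rightarrow> 'c monoid \<Rightarrow> ('c \<Rightarrow> 'b) \<Rightarrow> ('e \<times> 'c) monoid" where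
  "pb_mid E p B' g = (DirProd E B')
     \<lparr>carrier := {(e, b'). e \<in> carrier E \<and> b' \<in> carrier B' \<and> p e = g b'}\<rparr>"

definition pb_inc :: "('a \<Rightarrow> 'e) \<Rightarrow> 'c monoid \<Rightarrow> 'a \<Rightarrow> 'e \<times> 'c" where
  "pb_inc i B' a = (i a, \<one>\<^bsub>B'\<^esub>)"

definition pb_proj :: "'e \<times> 'c \<Rightarrow> 'c" where
  "pb_proj x = snd x"

definition po_sub :: "'a monoid \<Rightarrow> 'e monoid \<Rightarrow> ('a \<Rightarrow> 'e) \<Rightarrow> ('a \<Rightarrow> 'd) \<Rightarrow> ('d \<times> 'e) set" where
  "po_sub A E i f = (\<lambda>a. (f a, inv\<^bsub>E\<^esub> (i a))) ` carrier A"

definition po_mid :: "'a monoid \<Rightarrow> 'd monoid \<Rightarrow> 'e monoid \<Rightarrow> ('a \<Rightarrow> 'e) \<Rightarrow> ('a \<Rightarrow> 'd) \<Rightarrow> ('d \<times> 'e) set monoid" where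
  "po_mid A A' E i f = DirProd A' E Mod po_sub A E i f"

definition po_inc :: "'a monoid \<Rightarrow> 'd monoid \<Rightarrow> 'e monoid \<Rightarrow> ('a \<Rightarrow> 'e) \<Rightarrow> ('a \<Rightarrow> 'd) \<Rightarrow> 'd \<Rightarrow> ('d \<times> 'e) set" where
  "po_inc A A' E i f a' = r_coset (DirProd A' E) (po_sub A E i f) (a', \<one>\<^bsub>E\<^esub>)"

text \<open>Induced projection [(a',e)] \<mapsto> p e (well defined on cosets).\<close>
definition po_proj :: "('e \<Rightarrow> 'b) \<Rightarrow> ('d \<times> 'e) set \<Rightarrow> 'b" where
  "po_proj q S = the_elem ((\<lambda>x. q (snd x)) ` S)"

text \<open>Paths in AbSES(B,A) (by univalence): isomorphisms of middle groups commuting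
with the inclusions and projections.\<close>
definition AbSES_equiv ::
  "'a monoid \<Rightarrow> 'e1 monoid \<Rightarrow> ('a \<Rightarrow> 'e1) \<Rightarrow> ('e1 \<Rightarrow> 'b) \<Rightarrow>
   'e2 monoid \<Rightarrow> ('a \<Rightarrow> 'e2) \<Rightarrow> ('e2 \<Rightarrow> 'b) \<Rightarrow> bool" where
  "AbSES_equiv A E1 i1 p1 E2 i2 p2 \<longleftrightarrow>
     (\<exists>\<phi>. \<phi> \<in> iso E1 E2 \<and>
          (\<forall>a \<in> carrier A. \<phi> (i1 a) = i2 a) \<and>
          (\<forall>x \<in> carrier E1. p2 (\<phi> x) = p1 x))"

end

theory Submission
  imports Defs
begin

(* Both f_*(g^*E) and g^*(f_*E) are quotients of A' \<oplus> (E \<times>_B B').  The map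
   (a', e, b') \<mapsto> ([a', e], b') onto g^*(f_*E) is a surjective homomorphism whose kernel is
   exactly the subgroup {(f a, -i a, 0)} by which f_*(g^*E) is defined, so the first isomorphism
   theorem identifies the two middle groups; evaluating on coset representatives shows that the
   isomorphism respects inclusions and projections. *)

lemma comm_group_DirProd:
  assumes "comm_group G" "comm_group H"
  shows "comm_group (G \<times>\<times> H)"
proof -
  interpret G: comm_group G by fact
  interpret H: comm_group H by fact
  show ?thesis
    by (rule group.group_comm_groupI) (auto simp: DirProd_group G.m_comm H.m_comm)
qed

lemma (in group) rcos_eq_subgroup_iff:
  assumes "subgroup N G" "x \<in> carrier G"
  shows "N #> x = N \<longleftrightarrow> x \<in> N"
  using assms rcos_self subgroup.rcos_const is_group by metis

lemma (in group_hom) image_kernel_rcos: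
  assumes "x \<in> carrier G"
  shows "h ` (kernel G H h #> x) = {h x}"
  using assms by (force simp: kernel_def r_coset_def)

lemma subgroup_fibre_product:
  assumes "group_hom G1 H h1" "group_hom G2 H h2"
  shows "subgroup {(x, y). x \<in> carrier G1 \<and> y \<in> carrier G2 \<and> h1 x = h2 y} (G1 \<times>\<times> G2)"
proof -
  interpret h1: group_hom G1 H h1 by fact
  interpret h2: group_hom G2 H h2 by fact
  show ?thesis
    by (rule group.subgroupI) (force simp: DirProd_group)+
qed

lemma pb_mid_simps:
  "carrier (pb_mid E p B' g) = {(e, b'). e \<in> carrier E \<and> b' \<in> carrier B' \<and> p e = g b'}"
  "x \<otimes>\<^bsub>pb_mid E p B' g\<^esub> y = x \<otimes>\<^bsub>E \<times>\<times> B'\<^esub> y"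
  "\<one>\<^bsub>pb_mid E p B' g\<^esub> = (\<one>\<^bsub>E\<^esub>, \<one>\<^bsub>B'\<^esub>)"
  by (simp_all add: pb_mid_def)

lemma
  assumes "group_hom E B p" "group_hom B' B g"
  shows group_pb_mid: "group (pb_mid E p B' g)"
    and inv_pb_mid: "x \<in> carrier (pb_mid E p B' g) \<Longrightarrow>
      inv\<^bsub>pb_mid E p B' g\<^esub> x = inv\<^bsub>E \<times>\<times> B'\<^esub> x"
proof -
  have EB': "group (E \<times>\<times> B')"
    using assms by (simp add: DirProd_group group_hom.axioms(1))
  note sub = subgroup_fibre_product[OF assms]
  show "group (pb_mid E p B' g)"
    using subgroup.subgroup_is_group[OF sub EB'] by (simp add: pb_mid_def)
  show "inv\<^bsub>pb_mid E p B' g\<^esub> x = inv\<^bsub>E \<times>\<times> B'\<^esub> x" if "x \<in> carrier (pb_mid E p B' g)"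
    using group.m_inv_consistent[OF EB' sub] that by (simp add: pb_mid_def)
qed

lemma pb_proj_hom:
  "pb_proj \<in> hom (pb_mid E p B' g) B'"
  by (auto simp: hom_def pb_mid_simps pb_proj_def)

lemma po_sub_normal:
  assumes "group_hom A E i" "group_hom A A' f" "comm_group A'" "comm_group E"
  shows "po_sub A E i f \<lhd> A' \<times>\<times> E"
proof -
  interpret i: group_hom A E i by fact
  interpret f: group_hom A A' f by fact
  interpret A'E: comm_group "A' \<times>\<times> E" using assms(3,4) by (rule comm_group_DirProd)
  have "subgroup (po_sub A E i f) (A' \<times>\<times> E)"
  proof (rule A'E.subgroupI)
    fix x y assume "x \<in> po_sub A E i f" "y \<in> po_sub A E i f"
    then obtain a b where "a \<in> carrier A" "x = (f a, inv\<^bsub>E\<^esub> i a)"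
      and "b \<in> carrier A" "y = (f b, inv\<^bsub>E\<^esub> i b)" by (auto simp: po_sub_def)
    then show "x \<otimes>\<^bsub>A' \<times>\<times> E\<^esub> y \<in> po_sub A E i f"
      unfolding po_sub_def using comm_group.inv_mult[OF assms(4)]
      by (auto intro!: image_eqI[where x="a \<otimes>\<^bsub>A\<^esub> b"])
  qed (force simp: po_sub_def intro: image_eqI[where x="inv\<^bsub>A\<^esub> _"])+
  then show ?thesis by (rule A'E.subgroup_imp_normal)
qed

lemma po_proj_rcos:
  assumes "group_hom A E i" "group_hom A A' f" "group_hom E B q"
    and q_i: "\<And>a. a \<in> carrier A \<Longrightarrow> q (i a) = \<one>\<^bsub>B\<^esub>"
    and "a' \<in> carrier A'" "e \<in> carrier E"
  shows "po_proj q (po_sub A E i f #>\<^bsub>A' \<times>\<times> E\<^esub> (a', e)) = q e"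
proof -
  interpret i: group_hom A E i by fact
  interpret f: group_hom A A' f by fact
  interpret q: group_hom E B q by fact
  have "(\<lambda>x. q (snd x)) ` (po_sub A E i f #>\<^bsub>A' \<times>\<times> E\<^esub> (a', e)) = {q e}"
  proof
    show "(\<lambda>x. q (snd x)) ` (po_sub A E i f #>\<^bsub>A' \<times>\<times> E\<^esub> (a', e)) \<subseteq> {q e}"
      using assms(5,6) q_i by (auto simp: r_coset_def po_sub_def)
    have "(f \<one>\<^bsub>A\<^esub> \<otimes>\<^bsub>A'\<^esub> a', inv\<^bsub>E\<^esub> (i \<one>\<^bsub>A\<^esub>) \<otimes>\<^bsub>E\<^esub> e) \<in> po_sub A E i f #>\<^bsub>A' \<times>\<times> E\<^esub> (a', e)"
      unfolding r_coset_def po_sub_def by force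
    then show "{q e} \<subseteq> (\<lambda>x. q (snd x)) ` (po_sub A E i f #>\<^bsub>A' \<times>\<times> E\<^esub> (a', e))"
      using assms(5,6) by force
  qed
  then show ?thesis by (simp add: po_proj_def)
qed

lemma po_proj_hom:
  assumes "group_hom A E i" "group_hom A A' f" "comm_group A'" "comm_group E" "group_hom E B q"
    and q_i: "\<And>a. a \<in> carrier A \<Longrightarrow> q (i a) = \<one>\<^bsub>B\<^esub>"
  shows "po_proj q \<in> hom (po_mid A A' E i f) B"
proof -
  interpret A': comm_group A' by fact
  interpret q: group_hom E B q by fact
  interpret po_sub: normal "po_sub A E i f" "A' \<times>\<times> E"
    using assms(1-4) by (rule po_sub_normal)
  note po_proj = po_proj_rcos[OF assms(1,2,5) q_i]
  show ?thesis
    unfolding po_mid_def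
    by (rule homI) (auto simp: carrier_FactGroup po_proj po_sub.rcos_sum)
qed

locale pullback_pushout =
  i: group_hom A E i + p: group_hom E B p + f: group_hom A A' f + g: group_hom B' B g +
  A': comm_group A' + E: comm_group E
  for A :: "'a monoid" and A' :: "'d monoid" and B :: "'b monoid" and B' :: "'c monoid"
    and E :: "'e monoid" and i p f g +
  assumes p_i: "\<And>a. a \<in> carrier A \<Longrightarrow> p (i a) = \<one>\<^bsub>B\<^esub>"
begin

abbreviation "pbE \<equiv> pb_mid E p B' g"
abbreviation "poE \<equiv> po_mid A A' E i f"
abbreviation "pbpoE \<equiv> pb_mid poE (po_proj p) B' g"
abbreviation "popbE \<equiv> po_mid A A' pbE (pb_inc i B') f"

definition interchange :: "'d \<times> 'e \<times> 'c \<Rightarrow> ('d \<times> 'e) set \<times> 'c" where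
  "interchange = (\<lambda>(a', e, b'). (po_sub A E i f #>\<^bsub>A' \<times>\<times> E\<^esub> (a', e), b'))"

lemma interchange_apply [simp]:
  "interchange (a', e, b') = (po_sub A E i f #>\<^bsub>A' \<times>\<times> E\<^esub> (a', e), b')"
  by (simp add: interchange_def)

lemma group_pbE: "group pbE"
  by (rule group_pb_mid) unfold_locales

lemma group_hom_pb_inc: "group_hom A pbE (pb_inc i B')"
proof -
  have "pb_inc i B' \<in> hom A pbE"
    using p_i by (intro homI) (auto simp: pb_mid_simps pb_inc_def)
  then show ?thesis
    using group_pbE by (simp add: group_hom_def group_hom_axioms_def)
qed

sublocale po_sub: normal "po_sub A E i f" "A' \<times>\<times> E"
  using i.group_hom_axioms f.group_hom_axioms A'.comm_group_axioms E.comm_group_axioms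
  by (rule po_sub_normal)

lemma po_proj_rcos_E:
  "a' \<in> carrier A' \<Longrightarrow> e \<in> carrier E \<Longrightarrow> po_proj p (po_sub A E i f #>\<^bsub>A' \<times>\<times> E\<^esub> (a', e)) = p e"
  using i.group_hom_axioms f.group_hom_axioms p.group_hom_axioms p_i by (rule po_proj_rcos)

lemma group_hom_po_proj: "group_hom poE B (po_proj p)"
proof -
  have "po_proj p \<in> hom poE B"
    using i.group_hom_axioms f.group_hom_axioms A'.comm_group_axioms E.comm_group_axioms
      p.group_hom_axioms p_i by (rule po_proj_hom)
  then show ?thesis
    by (simp add: group_hom_def group_hom_axioms_def po_mid_def po_sub.factorgroup_is_group)
qed

lemma interchange_hom: "interchange \<in> hom (A' \<times>\<times> pbE) pbpoE"
  by (rule homI)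
    (auto simp: pb_mid_simps po_mid_def carrier_FactGroup po_proj_rcos_E po_sub.rcos_sum)

lemma interchange_onto: "interchange ` carrier (A' \<times>\<times> pbE) = carrier pbpoE"
proof
  show "interchange ` carrier (A' \<times>\<times> pbE) \<subseteq> carrier pbpoE"
    using interchange_hom by (rule hom_carrier)
  show "carrier pbpoE \<subseteq> interchange ` carrier (A' \<times>\<times> pbE)"
    by (force simp: pb_mid_simps po_mid_def carrier_FactGroup po_proj_rcos_E)
qed

lemma inv_pb_inc:
  assumes "a \<in> carrier A"
  shows "inv\<^bsub>pbE\<^esub> (pb_inc i B' a) = (inv\<^bsub>E\<^esub> (i a), \<one>\<^bsub>B'\<^esub>)"
proof -
  have "pb_inc i B' a \<in> carrier pbE"
    using assms p_i by (simp add: pb_mid_simps pb_inc_def)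
  then show ?thesis
    using assms
    by (simp add: inv_pb_mid[OF p.group_hom_axioms g.group_hom_axioms] pb_inc_def)
qed

lemma po_sub_pbE: "po_sub A pbE (pb_inc i B') f = (\<lambda>(a', e). (a', e, \<one>\<^bsub>B'\<^esub>)) ` po_sub A E i f"
  unfolding po_sub_def image_image pb_inc_def
  by (rule image_cong) (simp_all add: inv_pb_inc[unfolded pb_inc_def])

lemma kernel_interchange: "kernel (A' \<times>\<times> pbE) pbpoE interchange = po_sub A pbE (pb_inc i B') f"
proof -
  have one: "\<one>\<^bsub>poE\<^esub> = po_sub A E i f"
    by (simp add: po_mid_def FactGroup_def)
  have rcos_eq_iff: "po_sub A E i f #>\<^bsub>A' \<times>\<times> E\<^esub> (a', e) = po_sub A E i f \<longleftrightarrow> (a', e) \<in> po_sub A E i f"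
    if "a' \<in> carrier A'" "e \<in> carrier E" for a' e
    using that by (simp add: po_sub.rcos_eq_subgroup_iff po_sub.subgroup_axioms)
  have "(a', e, b') \<in> kernel (A' \<times>\<times> pbE) pbpoE interchange \<longleftrightarrow>
      (a', e) \<in> po_sub A E i f \<and> b' = \<one>\<^bsub>B'\<^esub>" for a' e b'
  proof
    assume "(a', e, b') \<in> kernel (A' \<times>\<times> pbE) pbpoE interchange"
    then have "a' \<in> carrier A'" "e \<in> carrier E"
      "po_sub A E i f #>\<^bsub>A' \<times>\<times> E\<^esub> (a', e) = po_sub A E i f" "b' = \<one>\<^bsub>B'\<^esub>"
      by (simp_all add: kernel_def one pb_mid_simps)
    then show "(a', e) \<in> po_sub A E i f \<and> b' = \<one>\<^bsub>B'\<^esub>"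
      using rcos_eq_iff by blast
  next
    assume sub: "(a', e) \<in> po_sub A E i f \<and> b' = \<one>\<^bsub>B'\<^esub>"
    then have "a' \<in> carrier A'" "e \<in> carrier E" "p e = \<one>\<^bsub>B\<^esub>"
      using p_i by (auto simp: po_sub_def)
    moreover have "po_sub A E i f #>\<^bsub>A' \<times>\<times> E\<^esub> (a', e) = po_sub A E i f"
      using sub calculation rcos_eq_iff by blast
    ultimately show "(a', e, b') \<in> kernel (A' \<times>\<times> pbE) pbpoE interchange"
      using sub by (simp add: kernel_def one pb_mid_simps)
  qed
  then show ?thesis
    unfolding po_sub_pbE by auto
qed

sublocale interchange: group_hom "A' \<times>\<times> pbE" pbpoE interchange
  using group_pbE group_pb_mid[OF group_hom_po_proj g.group_hom_axioms] interchange_hom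
  by (simp add: group_hom_def group_hom_axioms_def DirProd_group)

lemma interchange_iso: "(\<lambda>Z. the_elem (interchange ` Z)) \<in> iso popbE pbpoE"
  using interchange.FactGroup_iso_set[OF interchange_onto, unfolded kernel_interchange]
  by (simp add: po_mid_def)

lemma the_elem_interchange_rcos:
  assumes "x \<in> carrier (A' \<times>\<times> pbE)"
  shows "the_elem (interchange ` (po_sub A pbE (pb_inc i B') f #>\<^bsub>A' \<times>\<times> pbE\<^esub> x)) = interchange x"
  using interchange.image_kernel_rcos[OF assms] by (simp add: kernel_interchange)

lemma interchange_po_inc:
  assumes "a' \<in> carrier A'"
  shows "the_elem (interchange ` po_inc A A' pbE (pb_inc i B') f a') = pb_inc (po_inc A A' E i f) B' a'"
proof -
  have "(a', \<one>\<^bsub>pbE\<^esub>) \<in> carrier (A' \<times>\<times> pbE)"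
    using assms group.is_monoid[OF group_pbE] by simp
  then show ?thesis
    by (simp add: po_inc_def the_elem_interchange_rcos pb_mid_simps pb_inc_def)
qed

lemma pb_proj_interchange:
  assumes "Z \<in> carrier popbE"
  shows "pb_proj (the_elem (interchange ` Z)) = po_proj pb_proj Z"
proof -
  obtain a' e b' where x: "a' \<in> carrier A'" "(e, b') \<in> carrier pbE"
    and Z: "Z = po_sub A pbE (pb_inc i B') f #>\<^bsub>A' \<times>\<times> pbE\<^esub> (a', e, b')"
    using assms by (auto simp: po_mid_def carrier_FactGroup)
  have "group_hom pbE B' pb_proj"
    using group_pbE pb_proj_hom by (simp add: group_hom_def group_hom_axioms_def)
  then have "po_proj pb_proj Z = b'"
    using group_hom_pb_inc f.group_hom_axioms x unfolding Z
    by (subst po_proj_rcos) (auto simp: pb_proj_def pb_inc_def)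
  then show ?thesis
    using x by (simp add: Z the_elem_interchange_rcos pb_proj_def)
qed

end

theorem proposition9:
  fixes A :: "'a monoid" and A' :: "'d monoid" and B :: "'b monoid" and B' :: "'c monoid"
    and E :: "'e monoid" and i :: "'a \<Rightarrow> 'e" and p :: "'e \<Rightarrow> 'b"
    and f :: "'a \<Rightarrow> 'd" and g :: "'c \<Rightarrow> 'b"
  assumes "is_AbSES B A E i p"
    and "comm_group A'" and "comm_group B'"
    and "f \<in> hom A A'" and "g \<in> hom B' B"
  shows "AbSES_equiv A'
           (po_mid A A' (pb_mid E p B' g) (pb_inc i B') f)
           (po_inc A A' (pb_mid E p B' g) (pb_inc i B') f)
           (po_proj pb_proj)
           (pb_mid (po_mid A A' E i f) (po_proj p) B' g)
           (pb_inc (po_inc A A' E i f) B')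
           pb_proj"
proof -
  interpret pullback_pushout A A' B B' E i p f g
    using assms
    by (simp add: pullback_pushout_def pullback_pushout_axioms_def is_AbSES_def
        group_hom_def group_hom_axioms_def comm_group_def)
  show ?thesis
    unfolding AbSES_equiv_def
    using interchange_iso interchange_po_inc pb_proj_interchange by blast
qed

end
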